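(* Let $M,N>0$. Define a sequence $a^{(m)}=a^{(m)}(M,N)$ by $a^{(0)}=M$ and, for $m\ge1$, $$a^{(m)}=Nm\sum_{r=0}^{m-1}\binom{m-1}{r}a^{(r)}a^{(m-r-1)}+\frac{N}{m+1}\sum_{r=2}^{m-1}\binom{m+1}{r}a^{(r)}a^{(m-r+1)}.$$ Then $\sum_{m=0}^\infty a^{(m)}t^m/m!$ converges in a neighborhood of $t=0$ and its sum equals $$a(t)=\frac{M+t\left(M^2N+\frac{1}{2N}\right)-t\sqrt{\frac{1}{4N^2}-t\left(2M^3N+\frac{M}{N}\right)-t^2M^4N^2}}{t^2+1}.$$
   Context: An empty sum equals $0$. *)

theory Defs
  imports Complex_Main
begin

function aseq :: "real \<Rightarrow> real \<Rightarrow> nat \<Rightarrow> real" where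
  "aseq M N 0 = M"
| "aseq M N (Suc k) =
     (let m = Suc k in
      N * real m * (\<Sum>r\<in>{0..m-1}. real ((m-1) choose r) * aseq M N r * aseq M N (m - r - 1))
      + N / real (m+1) * (\<Sum>r\<in>{2..m-1}. real ((m+1) choose r) * aseq M N r * aseq M N (m - r + 1)))"
  by pat_completeness auto
termination
  by (relation "measure (\<lambda>(M,N,m). m)") auto

end

theory Submission
  imports Defs
begin

(* With b m = a^(m) / m! the recursion becomes the convolution identity
   b (k+1) = N (b * b)_k + N (c * c)_(k+2), where c is b with its first two terms removed.
   For the power series y(t) = sum b m t^m and its tail C(t) = y(t) - M - M^2 N t this reads
   y - M = N t y^2 + (N/t) C^2, a quadratic equation for y whose root is the claimed closed form;
   the root with the minus sign is the one for which 1 - 2N(C/t + t y) stays positive near t = 0.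
   Convergence comes from a majorant argument: for small r > 0 the partial sums of the tail at r
   stay below r/(2N), by induction on the truncated quadratic inequality. *)

(* Unfolding the recursion under sums makes the simplifier diverge. *)
declare aseq.simps(2)[simp del]

lemma convolution_sum_le_square:
  fixes x :: "nat \<Rightarrow> real"
  assumes nonneg: "\<And>j. 0 \<le> x j"
    and support: "\<And>i j. i + j \<le> m \<Longrightarrow> x i * x j \<noteq> 0 \<Longrightarrow> i \<le> n \<and> j \<le> n"
  shows "(\<Sum>k\<le>m. \<Sum>i\<le>k. x i * x (k - i)) \<le> (\<Sum>j\<le>n. x j)\<^sup>2"
proof -
  let ?T = "{(i, j). i + j \<le> m}" and ?S = "{..n} \<times> {..n}"
  have "finite ?T"
    by (rule finite_subset[of _ "{..m} \<times> {..m}"]) auto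
  have "(\<Sum>k\<le>m. \<Sum>i\<le>k. x i * x (k - i)) = (\<Sum>(i, j)\<in>?T. x i * x j)"
    by (rule sum.triangle_reindex_eq[symmetric])
  also have "\<dots> = (\<Sum>(i, j)\<in>?T \<inter> ?S. x i * x j)"
    using \<open>finite ?T\<close> support by (intro sum.mono_neutral_right) auto
  also have "\<dots> \<le> (\<Sum>(i, j)\<in>?S. x i * x j)"
    using nonneg by (intro sum_mono2) auto
  also have "\<dots> = (\<Sum>j\<le>n. x j)\<^sup>2"
    by (simp add: power2_eq_square sum_product sum.cartesian_product)
  finally show ?thesis .
qed

lemma binomial_div_fact:
  assumes "r \<le> n"
  shows "real (n choose r) * x * y / fact n = x / fact r * (y / fact (n - r))"
  using assms by (simp add: binomial_fact field_simps)

lemma aseq_Suc_eq: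
  "aseq M N (Suc k) = N * real (Suc k) * (\<Sum>r\<le>k. real (k choose r) * aseq M N r * aseq M N (k - r))
      + N / real (k + 2) * (\<Sum>r=2..k. real ((k + 2) choose r) * aseq M N r * aseq M N (k + 2 - r))"
proof -
  have "(\<Sum>r=2..k. real ((k + 2) choose r) * aseq M N r * aseq M N (Suc k - r + 1))
      = (\<Sum>r=2..k. real ((k + 2) choose r) * aseq M N r * aseq M N (k + 2 - r))"
    by (intro sum.cong) (auto simp: Suc_diff_le)
  then show ?thesis
    by (simp only: aseq.simps(2) Let_def diff_Suc_1 atMost_atLeast0 diff_diff_left) simp
qed

lemma aseq_div_fact_Suc:
  fixes M N :: real
  defines "b \<equiv> \<lambda>m. aseq M N m / fact m"
  shows "b (Suc k) = N * (\<Sum>r\<le>k. b r * b (k - r)) + N * (\<Sum>r=2..k. b r * b (k + 2 - r))"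
proof -
  let ?A = "aseq M N"
  have "fact (Suc k) = real (Suc k) * fact k"
    and "fact (k + 2) = real (k + 2) * fact (Suc k)"
    by (simp_all add: fact_Suc[of "Suc k"])
  then have "b (Suc k) = N * ((\<Sum>r\<le>k. real (k choose r) * ?A r * ?A (k - r)) / fact k)
      + N * ((\<Sum>r=2..k. real ((k + 2) choose r) * ?A r * ?A (k + 2 - r)) / fact (k + 2))"
    unfolding b_def aseq_Suc_eq by (simp add: field_simps del: of_nat_Suc)
  also have "(\<Sum>r\<le>k. real (k choose r) * ?A r * ?A (k - r)) / fact k = (\<Sum>r\<le>k. b r * b (k - r))"
    unfolding sum_divide_distrib b_def by (intro sum.cong refl binomial_div_fact) simp
  also have "(\<Sum>r=2..k. real ((k + 2) choose r) * ?A r * ?A (k + 2 - r)) / fact (k + 2)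
      = (\<Sum>r=2..k. b r * b (k + 2 - r))"
    unfolding sum_divide_distrib b_def by (intro sum.cong refl binomial_div_fact) simp
  finally show ?thesis .
qed

definition closed_form :: "real \<Rightarrow> real \<Rightarrow> real \<Rightarrow> real" where
  "closed_form M N t = (M + t * (M\<^sup>2 * N + 1 / (2 * N))
      - t * sqrt (1 / (4 * N\<^sup>2) - t * (2 * M ^ 3 * N + M / N) - t\<^sup>2 * M ^ 4 * N\<^sup>2)) / (t\<^sup>2 + 1)"

lemma closed_form_root:
  fixes M N t y c :: real
  assumes N: "0 < N" and t: "t \<noteq> 0"
    and y: "y = M + M\<^sup>2 * N * t + c"
    and eq: "y - M = N * t * y\<^sup>2 + N / t * c\<^sup>2"
    and root: "2 * N * (c / t + t * y) < 1"
  shows "y = closed_form M N t"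
proof -
  define D where "D = 1 / (4 * N\<^sup>2) - t * (2 * M ^ 3 * N + M / N) - t\<^sup>2 * M ^ 4 * N\<^sup>2"
  define s where "s = 1 - 2 * N * (c / t + t * y)"
  have "t * (y - M) = t * (N * t * y\<^sup>2 + N / t * c\<^sup>2)"
    using eq by simp
  also have "\<dots> = N * t\<^sup>2 * y\<^sup>2 + N * c\<^sup>2"
    using t by (simp add: field_simps power2_eq_square)
  finally have quadratic: "N * t\<^sup>2 * y\<^sup>2 + N * c\<^sup>2 - t * y + t * M = 0"
    by (simp add: right_diff_distrib)
  have "(t * s)\<^sup>2 - t\<^sup>2 * (4 * N\<^sup>2 * D)
      = 4 * N * (1 + t\<^sup>2) * (N * t\<^sup>2 * y\<^sup>2 + N * c\<^sup>2 - t * y + t * M)"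
  proof -
    have "t * s = t - 2 * N * c - 2 * N * t\<^sup>2 * y" and
      "t\<^sup>2 * (4 * N\<^sup>2 * D)
        = t\<^sup>2 - t ^ 3 * (8 * M ^ 3 * N ^ 3 + 4 * M * N) - 4 * t ^ 4 * M ^ 4 * N ^ 4"
      using N t by (simp_all add: s_def D_def field_simps power2_eq_square eval_nat_numeral)
    then show ?thesis
      unfolding y by algebra
  qed
  then have "t\<^sup>2 * s\<^sup>2 = t\<^sup>2 * (4 * N\<^sup>2 * D)"
    unfolding quadratic by (simp add: power_mult_distrib)
  then have "D = (s / (2 * N))\<^sup>2"
    using N t by (simp add: power_divide power_mult_distrib)
  moreover have "0 < s / (2 * N)"
    using root N by (simp add: s_def)
  ultimately have sqrt_D: "sqrt D = s / (2 * N)"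
    by (simp only: real_sqrt_abs abs_of_pos)
  have "y * (t\<^sup>2 + 1) = M + t * (M\<^sup>2 * N + 1 / (2 * N)) - t * (s / (2 * N))"
    using N t by (simp add: s_def y field_simps power2_eq_square)
  moreover have "0 < t\<^sup>2 + 1"
    by (simp add: add_nonneg_pos)
  ultimately show ?thesis
    unfolding closed_form_def D_def[symmetric] sqrt_D by (simp add: eq_divide_eq)
qed

locale quadratic_recurrence =
  fixes M N :: real and b :: "nat \<Rightarrow> real"
  assumes M_pos: "0 < M" and N_pos: "0 < N"
    and b_0: "b 0 = M"
    and b_Suc: "b (Suc k) = N * (\<Sum>r\<le>k. b r * b (k - r)) + N * (\<Sum>r=2..k. b r * b (k + 2 - r))"
begin

lemma b_nonneg: "0 \<le> b m"
proof (induction m rule: less_induct)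
  case (less m)
  then show ?case
    using M_pos N_pos
    by (cases m) (auto simp: b_0 b_Suc intro!: sum_nonneg add_nonneg_nonneg mult_nonneg_nonneg)
qed

lemma b_1: "b 1 = M\<^sup>2 * N"
  using b_Suc[of 0] by (simp add: b_0 power2_eq_square)

definition tail_term :: "real \<Rightarrow> nat \<Rightarrow> real"
  where "tail_term t j = (if 2 \<le> j then b j * t ^ j else 0)"

lemma tail_term_nonneg: "0 \<le> t \<Longrightarrow> 0 \<le> tail_term t j"
  by (simp add: tail_term_def b_nonneg)

lemma tail_convolution_eq_0:
  assumes "k < 2"
  shows "(\<Sum>i\<le>k. tail_term t i * tail_term t (k - i)) = 0"
  using assms less_2_cases by (auto simp: tail_term_def)

lemma b_Suc_power:
  assumes "t \<noteq> 0"
  shows "b (Suc k) * t ^ Suc k = N * t * (\<Sum>i\<le>k. b i * t ^ i * (b (k - i) * t ^ (k - i)))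
    + N / t * (\<Sum>i\<le>k + 2. tail_term t i * tail_term t (k + 2 - i))"
proof -
  have "(\<Sum>i\<le>k. b i * t ^ i * (b (k - i) * t ^ (k - i))) = (\<Sum>i\<le>k. b i * b (k - i)) * t ^ k"
    unfolding sum_distrib_right by (intro sum.cong refl) (simp add: algebra_simps flip: power_add)
  moreover have "(\<Sum>i\<le>k + 2. tail_term t i * tail_term t (k + 2 - i))
      = (\<Sum>i=2..k. b i * b (k + 2 - i)) * t ^ (k + 2)"
  proof -
    have "(\<Sum>i\<le>k + 2. tail_term t i * tail_term t (k + 2 - i))
        = (\<Sum>i=2..k. tail_term t i * tail_term t (k + 2 - i))"
      by (intro sum.mono_neutral_right) (auto simp: tail_term_def)
    also have "\<dots> = (\<Sum>i=2..k. b i * b (k + 2 - i) * t ^ (k + 2))"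
    proof (intro sum.cong refl)
      fix i assume "i \<in> {2..k}"
      then have "2 \<le> k + 2 - i" and "t ^ i * t ^ (k + 2 - i) = t ^ (k + 2)"
        by (auto simp flip: power_add)
      with \<open>i \<in> {2..k}\<close>
      show "tail_term t i * tail_term t (k + 2 - i) = b i * b (k + 2 - i) * t ^ (k + 2)"
        by (simp add: tail_term_def algebra_simps)
    qed
    finally show ?thesis
      by (simp add: sum_distrib_right)
  qed
  ultimately show ?thesis
    using assms by (simp add: b_Suc algebra_simps power2_eq_square)
qed

lemma partial_sum_Suc_le:
  assumes "0 < t"
  shows "(\<Sum>j\<le>Suc n. b j * t ^ j)
    \<le> M + N * t * (\<Sum>j\<le>n. b j * t ^ j)\<^sup>2 + N / t * (\<Sum>j\<le>n. tail_term t j)\<^sup>2"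
proof -
  let ?a = "\<lambda>j. b j * t ^ j" and ?c = "tail_term t"
  let ?g = "\<lambda>k. \<Sum>i\<le>k. ?c i * ?c (k - i)"
  have "(\<Sum>j\<le>Suc n. ?a j) = b 0 + (\<Sum>k\<le>n. ?a (Suc k))"
    by (simp add: sum.atMost_Suc_shift del: sum.atMost_Suc)
  also have "\<dots> = M + (\<Sum>k\<le>n. N * t * (\<Sum>i\<le>k. ?a i * ?a (k - i)) + N / t * ?g (k + 2))"
    unfolding b_0 using assms by (intro arg_cong[where f = "(+) M"] sum.cong refl b_Suc_power) simp
  finally have sum_eq: "(\<Sum>j\<le>Suc n. ?a j)
      = M + N * t * (\<Sum>k\<le>n. \<Sum>i\<le>k. ?a i * ?a (k - i)) + N / t * (\<Sum>k\<le>n. ?g (k + 2))"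
    by (simp only: sum.distrib sum_distrib_left)
  have conv_le: "(\<Sum>k\<le>n. \<Sum>i\<le>k. ?a i * ?a (k - i)) \<le> (\<Sum>j\<le>n. ?a j)\<^sup>2"
    using assms by (intro convolution_sum_le_square) (auto simp: b_nonneg)
  have tail_conv_le: "(\<Sum>k\<le>n. ?g (k + 2)) \<le> (\<Sum>j\<le>n. ?c j)\<^sup>2"
  proof -
    have "(\<Sum>k\<le>n + 2. ?g k) = ?g 0 + ?g 1 + (\<Sum>k\<le>n. ?g (k + 2))"
      by (simp add: sum.atMost_Suc_shift del: sum.atMost_Suc)
    moreover have "?g 0 = 0" "?g 1 = 0"
      by (rule tail_convolution_eq_0; simp)+
    moreover have "(\<Sum>k\<le>n + 2. ?g k) \<le> (\<Sum>j\<le>n. ?c j)\<^sup>2"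
      using assms
      by (intro convolution_sum_le_square tail_term_nonneg) (auto simp: tail_term_def split: if_splits)
    ultimately show ?thesis
      by simp
  qed
  have "0 \<le> N * t" and "0 \<le> N / t"
    using assms N_pos by simp_all
  then show ?thesis
    using sum_eq mult_left_mono[OF conv_le \<open>0 \<le> N * t\<close>] mult_left_mono[OF tail_conv_le \<open>0 \<le> N / t\<close>]
    by linarith
qed

lemma partial_sum_Suc_eq:
  "(\<Sum>j\<le>Suc n. b j * t ^ j) = M + M\<^sup>2 * N * t + (\<Sum>j\<le>Suc n. tail_term t j)"
  using b_1 by (induction n) (simp_all add: b_0 tail_term_def)

(* The radii for which the induction in tail_partial_sum_le below closes. *)
definition admissible_radius :: "real \<Rightarrow> bool" where
  "admissible_radius r \<longleftrightarrow> 0 < r \<and> (M + r * (M\<^sup>2 * N + 1 / (2 * N)))\<^sup>2 \<le> M\<^sup>2 + 1 / (4 * N\<^sup>2)"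

lemma admissible_radius_exists: "\<exists>r. admissible_radius r"
proof -
  have "((\<lambda>r. (M + r * (M\<^sup>2 * N + 1 / (2 * N)))\<^sup>2) \<longlongrightarrow> M\<^sup>2) (at_right 0)"
    by (auto intro!: tendsto_eq_intros)
  moreover have "M\<^sup>2 < M\<^sup>2 + 1 / (4 * N\<^sup>2)"
    using N_pos by simp
  ultimately have "\<forall>\<^sub>F r in at_right 0. (M + r * (M\<^sup>2 * N + 1 / (2 * N)))\<^sup>2 < M\<^sup>2 + 1 / (4 * N\<^sup>2)"
    by (rule order_tendstoD)
  then have "\<forall>\<^sub>F r in at_right 0. admissible_radius r"
    using eventually_at_right_less by eventually_elim (auto simp: admissible_radius_def)
  then show ?thesis
    by (rule eventually_happens'[OF trivial_limit_at_right_real])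
qed

lemma tail_partial_sum_le:
  assumes "admissible_radius r"
  shows "(\<Sum>j\<le>n. tail_term r j) \<le> r / (2 * N)"
proof (induction n)
  case 0
  show ?case
    using assms N_pos by (simp add: admissible_radius_def tail_term_def)
next
  case (Suc n)
  let ?S = "\<Sum>j\<le>n. b j * r ^ j" and ?T = "\<Sum>j\<le>n. tail_term r j"
  have r: "0 < r" and small: "(M + r * (M\<^sup>2 * N + 1 / (2 * N)))\<^sup>2 \<le> M\<^sup>2 + 1 / (4 * N\<^sup>2)"
    using assms by (simp_all add: admissible_radius_def)
  have "?S \<le> M + M\<^sup>2 * N * r + ?T"
  proof (cases n)
    case 0
    then show ?thesis
      using r N_pos by (simp add: b_0 tail_term_def)
  qed (simp add: partial_sum_Suc_eq del: sum.atMost_Suc)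
  then have S_le: "?S \<le> M + r * (M\<^sup>2 * N + 1 / (2 * N))"
    using Suc.IH by (simp add: algebra_simps)
  have "0 \<le> ?S"
    using r by (intro sum_nonneg) (simp add: b_nonneg)
  then have S_sq: "?S\<^sup>2 \<le> M\<^sup>2 + 1 / (4 * N\<^sup>2)"
    using power_mono[OF S_le, of 2] small by linarith
  have T_sq: "?T\<^sup>2 \<le> (r / (2 * N))\<^sup>2"
    using Suc.IH r by (intro power_mono sum_nonneg tail_term_nonneg) auto
  have "(\<Sum>j\<le>Suc n. tail_term r j) = (\<Sum>j\<le>Suc n. b j * r ^ j) - M - M\<^sup>2 * N * r"
    by (simp add: partial_sum_Suc_eq del: sum.atMost_Suc)
  also have "\<dots> \<le> N * r * ?S\<^sup>2 + N / r * ?T\<^sup>2 - M\<^sup>2 * N * r"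
    using partial_sum_Suc_le[OF r, of n] by simp
  also have "\<dots> \<le> N * r * (M\<^sup>2 + 1 / (4 * N\<^sup>2)) + N / r * (r / (2 * N))\<^sup>2 - M\<^sup>2 * N * r"
    using S_sq T_sq r N_pos by (intro diff_right_mono add_mono mult_left_mono) auto
  also have "\<dots> = r / (2 * N)"
    using r N_pos by (simp add: field_simps power2_eq_square)
  finally show ?case .
qed

lemma tail_sum_le:
  assumes "admissible_radius r"
  shows "summable (tail_term r)" and "(\<Sum>j. tail_term r j) \<le> r / (2 * N)"
proof -
  have r: "0 \<le> r"
    using assms by (simp add: admissible_radius_def)
  have "sum (tail_term r) {..<n} \<le> r / (2 * N)" for n
  proof -
    have "sum (tail_term r) {..<n} \<le> sum (tail_term r) {..n}"
      using r by (intro sum_mono2 tail_term_nonneg) auto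
    also have "\<dots> \<le> r / (2 * N)"
      using tail_partial_sum_le[OF assms] .
    finally show ?thesis .
  qed
  moreover from this show "summable (tail_term r)"
    using r by (intro summableI_nonneg_bounded tail_term_nonneg) auto
  ultimately show "(\<Sum>j. tail_term r j) \<le> r / (2 * N)"
    by (intro suminf_le_const)
qed

lemma tail_term_le:
  assumes "0 < r" and "\<bar>t\<bar> \<le> r"
  shows "\<bar>tail_term t j\<bar> \<le> (t / r)\<^sup>2 * tail_term r j"
proof (cases "2 \<le> j")
  case True
  have "\<bar>t\<bar> ^ j = (\<bar>t\<bar> / r) ^ j * r ^ j"
    using assms by (simp add: power_divide)
  also have "\<dots> \<le> (\<bar>t\<bar> / r)\<^sup>2 * r ^ j"
    using assms True by (intro mult_right_mono power_decreasing) auto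
  finally have "b j * \<bar>t\<bar> ^ j \<le> b j * ((t / r)\<^sup>2 * r ^ j)"
    by (intro mult_left_mono b_nonneg) (simp add: power_divide)
  then show ?thesis
    using True b_nonneg[of j] by (simp add: tail_term_def abs_mult power_abs mult_ac)
qed (simp add: tail_term_def)

lemma summable_tail_term_iff: "summable (tail_term t) \<longleftrightarrow> summable (\<lambda>j. b j * t ^ j)"
proof -
  have "(\<lambda>j. tail_term t (j + 2)) = (\<lambda>j. b (j + 2) * t ^ (j + 2))"
    by (simp add: tail_term_def)
  then show ?thesis
    using summable_iff_shift[of "tail_term t" 2] summable_iff_shift[of "\<lambda>j. b j * t ^ j" 2] by simp
qed

lemma suminf_eq_tail:
  assumes "summable (\<lambda>j. b j * t ^ j)"
  shows "(\<Sum>j. b j * t ^ j) = M + M\<^sup>2 * N * t + (\<Sum>j. tail_term t j)"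
proof -
  have "(\<Sum>j. tail_term t j) = (\<Sum>j. tail_term t (j + 2)) + (\<Sum>j<2. tail_term t j)"
    using assms by (intro suminf_split_initial_segment) (simp add: summable_tail_term_iff)
  also have "\<dots> = (\<Sum>j. b (j + 2) * t ^ (j + 2))"
    by (simp add: tail_term_def lessThan_nat_numeral)
  finally show ?thesis
    using suminf_split_initial_segment[OF assms, of 2]
    by (simp add: lessThan_nat_numeral b_0 b_1[unfolded One_nat_def] power2_eq_square)
qed

lemma power_series_equation:
  assumes t: "t \<noteq> 0" and abs_summable: "summable (\<lambda>j. norm (b j * t ^ j))"
  shows "(\<Sum>j. b j * t ^ j) - M = N * t * (\<Sum>j. b j * t ^ j)\<^sup>2 + N / t * (\<Sum>j. tail_term t j)\<^sup>2"
proof -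
  let ?a = "\<lambda>j. b j * t ^ j" and ?c = "tail_term t"
  let ?g = "\<lambda>k. \<Sum>i\<le>k. ?c i * ?c (k - i)"
  have "summable (\<lambda>j. norm (?c j))"
    by (rule summable_comparison_test[OF _ abs_summable]) (auto simp: tail_term_def)
  then have "?g sums (\<Sum>j. ?c j)\<^sup>2"
    unfolding power2_eq_square by (intro Cauchy_product_sums)
  moreover have "(\<Sum>k<2. ?g k) = 0"
    by (intro sum.neutral) (simp add: tail_convolution_eq_0)
  ultimately have "(\<lambda>k. ?g (k + 2)) sums (\<Sum>j. ?c j)\<^sup>2"
    by (simp only: sums_iff_shift[of ?g 2] add_0_right)
  moreover have "(\<lambda>k. \<Sum>i\<le>k. ?a i * ?a (k - i)) sums (\<Sum>j. ?a j)\<^sup>2"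
    unfolding power2_eq_square using abs_summable by (intro Cauchy_product_sums)
  ultimately have "(\<lambda>k. ?a (Suc k)) sums (N * t * (\<Sum>j. ?a j)\<^sup>2 + N / t * (\<Sum>j. ?c j)\<^sup>2)"
    unfolding b_Suc_power[OF t] by (intro sums_add sums_mult)
  moreover have "?a sums (\<Sum>j. ?a j)"
    using summable_norm_cancel[OF abs_summable] by (rule summable_sums)
  then have "(\<lambda>k. ?a (Suc k)) sums ((\<Sum>j. ?a j) - M)"
    using sums_iff_shift[of ?a 1 "(\<Sum>j. ?a j) - M"] by (simp add: b_0)
  ultimately show ?thesis
    using sums_unique2 by blast
qed

lemma power_series_sums_closed_form:
  assumes t: "t \<noteq> 0" and abs_summable: "summable (\<lambda>j. norm (b j * t ^ j))"
    and root: "2 * N * ((\<Sum>j. tail_term t j) / t + t * (\<Sum>j. b j * t ^ j)) < 1"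
  shows "(\<lambda>m. b m * t ^ m) sums closed_form M N t"
proof -
  have summable: "summable (\<lambda>j. b j * t ^ j)"
    using abs_summable by (rule summable_norm_cancel)
  have "(\<Sum>j. b j * t ^ j) = closed_form M N t"
    using closed_form_root[OF N_pos t suminf_eq_tail[OF summable]
        power_series_equation[OF t abs_summable] root] .
  then show ?thesis
    using summable_sums[OF summable] by simp
qed

lemma summable_admissible_radius:
  assumes "admissible_radius r"
  shows "summable (\<lambda>j. b j * r ^ j)"
  using tail_sum_le(1)[OF assms] by (simp add: summable_tail_term_iff)

lemma power_series_bounds:
  assumes r: "admissible_radius r" and t_r: "\<bar>t\<bar> \<le> r" and t: "t \<noteq> 0"
  shows "summable (\<lambda>j. norm (b j * t ^ j))"
    and "2 * N * ((\<Sum>j. tail_term t j) / t + t * (\<Sum>j. b j * t ^ j))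
      \<le> \<bar>t\<bar> * (1 / r + 2 * N * (\<Sum>j. b j * r ^ j))"
proof -
  have "0 < r"
    using r by (simp add: admissible_radius_def)
  note summable_r = summable_admissible_radius[OF r] and tail_r = tail_sum_le[OF r]
  have norm_le: "norm (b j * t ^ j) \<le> b j * r ^ j" for j
    using t_r b_nonneg[of j] by (simp add: abs_mult power_abs mult_left_mono power_mono)
  show "summable (\<lambda>j. norm (b j * t ^ j))"
    using norm_le by (intro summable_comparison_test[OF _ summable_r]) auto
  have "\<bar>\<Sum>j. b j * t ^ j\<bar> \<le> (\<Sum>j. b j * r ^ j)"
    using norm_suminf_le[OF norm_le summable_r] by simp
  then have y_bound: "2 * N * \<bar>t * (\<Sum>j. b j * t ^ j)\<bar> \<le> \<bar>t\<bar> * (2 * N * (\<Sum>j. b j * r ^ j))"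
    using N_pos by (simp add: abs_mult mult_left_mono)
  have "\<bar>\<Sum>j. tail_term t j\<bar> \<le> (\<Sum>j. (t / r)\<^sup>2 * tail_term r j)"
    using norm_suminf_le[OF _ summable_mult[OF tail_r(1)], of "tail_term t"]
      tail_term_le[OF \<open>0 < r\<close> t_r] by simp
  also have "\<dots> \<le> (t / r)\<^sup>2 * (r / (2 * N))"
    unfolding suminf_mult[OF tail_r(1)] using tail_r(2) by (rule mult_left_mono) simp
  finally have c_bound: "2 * N * \<bar>(\<Sum>j. tail_term t j) / t\<bar> \<le> \<bar>t\<bar> * (1 / r)"
    using t \<open>0 < r\<close> N_pos by (simp add: field_simps power2_eq_square abs_mult)
  have "2 * N * ((\<Sum>j. tail_term t j) / t + t * (\<Sum>j. b j * t ^ j))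
      \<le> 2 * N * (\<bar>(\<Sum>j. tail_term t j) / t\<bar> + \<bar>t * (\<Sum>j. b j * t ^ j)\<bar>)"
    using N_pos by (intro mult_left_mono add_mono abs_ge_self) simp
  also have "\<dots> \<le> \<bar>t\<bar> * (1 / r + 2 * N * (\<Sum>j. b j * r ^ j))"
    using c_bound y_bound unfolding distrib_left by linarith
  finally show "2 * N * ((\<Sum>j. tail_term t j) / t + t * (\<Sum>j. b j * t ^ j))
      \<le> \<bar>t\<bar> * (1 / r + 2 * N * (\<Sum>j. b j * r ^ j))" .
qed

theorem sums_closed_form: "\<exists>\<epsilon>>0. \<forall>t. \<bar>t\<bar> < \<epsilon> \<longrightarrow> (\<lambda>m. b m * t ^ m) sums closed_form M N t"
proof -
  obtain r where r: "admissible_radius r"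
    using admissible_radius_exists ..
  define Y where "Y = (\<Sum>j. b j * r ^ j)"
  have "0 < r"
    using r by (simp add: admissible_radius_def)
  have "0 \<le> Y"
    unfolding Y_def using summable_admissible_radius[OF r] \<open>0 < r\<close>
    by (intro suminf_nonneg mult_nonneg_nonneg b_nonneg zero_le_power) auto
  define \<epsilon> where "\<epsilon> = min r (1 / (1 / r + 2 * N * Y))"
  have "0 < \<epsilon>"
    using \<open>0 < r\<close> N_pos \<open>0 \<le> Y\<close> by (simp add: \<epsilon>_def add_pos_nonneg)
  moreover have "(\<lambda>m. b m * t ^ m) sums closed_form M N t" if "\<bar>t\<bar> < \<epsilon>" for t
  proof (cases "t = 0")
    case False
    have "\<bar>t\<bar> \<le> r" and "\<bar>t\<bar> < 1 / (1 / r + 2 * N * Y)"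
      using that by (simp_all add: \<epsilon>_def)
    moreover have "0 < 1 / r + 2 * N * Y"
      using \<open>0 < r\<close> N_pos \<open>0 \<le> Y\<close> by (simp add: add_pos_nonneg)
    ultimately have "\<bar>t\<bar> \<le> r" and "\<bar>t\<bar> * (1 / r + 2 * N * Y) < 1"
      by (simp_all add: less_divide_eq)
    with power_series_bounds[OF r _ False] show ?thesis
      unfolding Y_def by (intro power_series_sums_closed_form[OF False]) auto
  qed (simp add: b_0 closed_form_def)
  ultimately show ?thesis
    by blast
qed

end

theorem lemma5:
  fixes M N :: real
  assumes "M > 0" and "N > 0"
  shows "\<exists>\<epsilon>>0. \<forall>t::real. \<bar>t\<bar> < \<epsilon> \<longrightarrow>
     (\<lambda>m. aseq M N m * t ^ m / fact m) sums
       ((M + t * (M^2 * N + 1 / (2 * N))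
           - t * sqrt (1 / (4 * N^2) - t * (2 * M^3 * N + M / N) - t^2 * M^4 * N^2))
        / (t^2 + 1))"
proof -
  interpret quadratic_recurrence M N "\<lambda>m. aseq M N m / fact m"
    by unfold_locales (simp_all add: assms aseq_div_fact_Suc[simplified])
  from sums_closed_form show ?thesis
    by (simp add: closed_form_def field_simps)
qed

end
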